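(* Let $\{X_1,X_2,\dots\}$ be a random dense countable subset of $(0,1)$ satisfying the independence condition and such that for every Borel set $B\subset(0,1)$ of Lebesgue measure $0$, $B\cap\{X_1,X_2,\dots\}=\emptyset$ a.s. If $\Pr(X_k=X_l)=0$ whenever $k\ne l$, then for every $n$ the joint distribution of $(X_1,\dots,X_n)$ is absolutely continuous with respect to Lebesgue measure on $(0,1)^n$.
   Context: A random countable subset of $(0,1)$ is given by random variables $X_1,X_2,\dots:\Omega\to(0,1)$ on a probability space, the set being $\omega\mapsto\{X_1(\omega),X_2(\omega),\dots\}$. It is dense if this set is dense in $(0,1)$ for a.e. $\omega$. Two random countable sets $\{X_k\},\{Y_k\}$ are identically distributed if some probability measure on $(0,1)^\infty\times(0,1)^\infty$ has marginals the laws of $(X_k)_k$ and $(Y_k)_k$ and is concentrated on pairs $(x,y)$ with $\{x_1,x_2,\dots\}=\{y_1,y_2,\dots\}$. Independence condition. For every $n\ge2$ and every $0=a_0<\dots<a_n=1$ there exist random variables $Y_{i,j}$ ($i\le n$, $j\ge1$) on some probability space such that: - $\{Y_{i,j}\}$ is distributed like $\{X_k\}$; - $Y_{i,j}\in[a_{i-1},a_i)$ a.s.; - the sequences $(Y_{i,j})_j$ are independent. *)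

theory Defs
  imports "HOL-Probability.Probability"
begin

definition seq_law :: "'a measure \<Rightarrow> (nat \<Rightarrow> 'a \<Rightarrow> real) \<Rightarrow> (nat \<Rightarrow> real) measure" where
  "seq_law M X = distr M (PiM UNIV (\<lambda>_. borel)) (\<lambda>\<omega> k. X k \<omega>)"

text \<open>Two sequence laws P, Q define identically distributed random countable sets:
  some probability measure on pairs of sequences has marginals P and Q and is
  concentrated on pairs with the same set of values.\<close>
definition same_random_set :: "(nat \<Rightarrow> real) measure \<Rightarrow> (nat \<Rightarrow> real) measure \<Rightarrow> bool" where
  "same_random_set P Q \<longleftrightarrow>
     (\<exists>\<mu>. prob_space \<mu> \<and>
        sets \<mu> = sets (PiM UNIV (\<lambda>_::nat. borel :: real measure) \<Otimes>\<^sub>M PiM UNIV (\<lambda>_::nat. borel :: real measure)) \<and>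
        distr \<mu> (PiM UNIV (\<lambda>_. borel)) fst = P \<and>
        distr \<mu> (PiM UNIV (\<lambda>_. borel)) snd = Q \<and>
        (AE p in \<mu>. range (fst p) = range (snd p)))"

text \<open>Indices: i < n (interval [a i, a (i+1))), j :: nat.
  The double family Y i j is enumerated as the sequence k \<mapsto> Y (k mod n) (k div n).
  The auxiliary probability space is taken on the canonical type nat \<Rightarrow> nat \<Rightarrow> real
  (no loss of generality: push forward along \<omega> \<mapsto> (\<lambda>i j. Y i j \<omega>)).\<close>
definition independence_condition :: "'a measure \<Rightarrow> (nat \<Rightarrow> 'a \<Rightarrow> real) \<Rightarrow> bool" where
  "independence_condition M X \<longleftrightarrow>
    (\<forall>n::nat. \<forall>a::nat \<Rightarrow> real.
       n \<ge> 2 \<and> a 0 = 0 \<and> a n = 1 \<and> (\<forall>i<n. a i < a (Suc i)) \<longrightarrow>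
       (\<exists>(N :: (nat \<Rightarrow> nat \<Rightarrow> real) measure) (Y :: nat \<Rightarrow> nat \<Rightarrow> (nat \<Rightarrow> nat \<Rightarrow> real) \<Rightarrow> real).
          prob_space N \<and>
          (\<forall>i<n. \<forall>j. Y i j \<in> borel_measurable N) \<and>
          same_random_set (seq_law N (\<lambda>k. Y (k mod n) (k div n))) (seq_law M X) \<and>
          (\<forall>i<n. \<forall>j. AE \<omega> in N. a i \<le> Y i j \<omega> \<and> Y i j \<omega> < a (Suc i)) \<and>
          prob_space.indep_vars N (\<lambda>_. PiM UNIV (\<lambda>_. borel)) (\<lambda>i \<omega>. (\<lambda>j. Y i j \<omega>)) {..<n}))"

end

theory Submission
  imports Defs
begin

text \<open>Fix a Lebesgue null set \<open>B\<close> in \<open>\<real>\<^sup>n\<close>. The \<open>X\<^sub>k\<close> are a.s. pairwise distinct, so for large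
  \<open>N\<close> the values \<open>X\<^sub>0, \<dots>, X\<^sub>n\<^sub>-\<^sub>1\<close> lie in pairwise distinct cells \<open>[i/N, (i+1)/N)\<close>. It therefore
  suffices that, for each \<open>N\<close>, a.s. no \<open>n\<close> values of the random set lying in distinct cells form
  a point of \<open>B\<close>. This event depends only on the set of values, so it can be checked on the
  representation \<open>Y\<^sub>i\<^sub>,\<^sub>j\<close> given by the independence condition for the grid \<open>a\<^sub>i = i/N\<close>. There,
  values in distinct cells come from distinct rows, which are independent, and every \<open>Y\<^sub>i\<^sub>,\<^sub>j\<close>
  has an absolutely continuous law because the null set hypothesis transfers from \<open>X\<close> to \<open>Y\<close>.
  So each of the countably many choices of \<open>n\<close> entries from distinct rows has an absolutely
  continuous joint law and avoids \<open>B\<close> a.s.\<close>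

lemma null_sets_distr_iff_AE:
  assumes "F \<in> measurable M N" "H \<in> sets N"
  shows "H \<in> null_sets (distr M N F) \<longleftrightarrow> (AE \<omega> in M. F \<omega> \<notin> H)"
proof -
  have "H \<in> null_sets (distr M N F) \<longleftrightarrow> (AE x in distr M N F. x \<notin> H)"
    using assms(2) by (intro AE_iff_null_sets) simp
  also have "\<dots> \<longleftrightarrow> (AE \<omega> in M. F \<omega> \<notin> H)"
    using assms by (intro AE_distr_iff) auto
  finally show ?thesis .
qed

lemma absolutely_continuous_distrI:
  assumes "F \<in> measurable M N" "sets L = sets N"
    and "\<And>B. B \<in> null_sets L \<Longrightarrow> AE \<omega> in M. F \<omega> \<notin> B"
  shows "absolutely_continuous L (distr M N F)"
  unfolding absolutely_continuous_def
  using assms null_sets_distr_iff_AE[OF assms(1)] by (auto simp: null_sets_def)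

lemma PiM_density:
  fixes \<mu> :: "'i \<Rightarrow> 'a measure"
  assumes K: "finite K" and \<mu>: "\<And>k. sigma_finite_measure (\<mu> k)"
    and f[measurable]: "\<And>k. f k \<in> borel_measurable (\<mu> k)"
    and prob: "\<And>k. prob_space (density (\<mu> k) (f k))"
  shows "PiM K (\<lambda>k. density (\<mu> k) (f k)) = density (PiM K \<mu>) (\<lambda>x. \<Prod>k\<in>K. f k (x k))"
proof (rule measure_eqI_PiM_finite[OF K])
  interpret product_sigma_finite \<mu>
    using \<mu> by (simp add: product_sigma_finite_def)
  interpret D: product_sigma_finite "\<lambda>k. density (\<mu> k) (f k)"
    using prob by (simp add: product_sigma_finite_def prob_space_imp_sigma_finite)
  interpret D: finite_product_sigma_finite "\<lambda>k. density (\<mu> k) (f k)" K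
    by standard (rule K)
  show "sets (PiM K (\<lambda>k. density (\<mu> k) (f k))) = sets (PiM K (\<lambda>k. density (\<mu> k) (f k)))" ..
  show "sets (density (PiM K \<mu>) (\<lambda>x. \<Prod>k\<in>K. f k (x k))) = sets (PiM K (\<lambda>k. density (\<mu> k) (f k)))"
    by (auto intro!: sets_PiM_cong)
  fix A assume A: "\<And>k. k \<in> K \<Longrightarrow> A k \<in> sets (density (\<mu> k) (f k))"
  then have A'[measurable]: "\<And>k. k \<in> K \<Longrightarrow> A k \<in> sets (\<mu> k)" by simp
  have "emeasure (density (PiM K \<mu>) (\<lambda>x. \<Prod>k\<in>K. f k (x k))) (PiE K A)
      = (\<integral>\<^sup>+ x. (\<Prod>k\<in>K. f k (x k)) * indicator (PiE K A) x \<partial>PiM K \<mu>)"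
    using A' K by (intro emeasure_density) (auto intro!: sets_PiM_I_finite)
  also have "\<dots> = (\<integral>\<^sup>+ x. (\<Prod>k\<in>K. f k (x k) * indicator (A k) (x k)) \<partial>PiM K \<mu>)"
  proof (rule nn_integral_cong)
    fix x assume "x \<in> space (PiM K \<mu>)"
    then have "indicator (PiE K A) x = (\<Prod>k\<in>K. indicator (A k) (x k) :: ennreal)"
      using K by (auto simp: space_PiM indicator_def PiE_def Pi_def)
    then show "(\<Prod>k\<in>K. f k (x k)) * indicator (PiE K A) x = (\<Prod>k\<in>K. f k (x k) * indicator (A k) (x k))"
      by (simp add: prod.distrib)
  qed
  also have "\<dots> = (\<Prod>k\<in>K. \<integral>\<^sup>+ y. f k y * indicator (A k) y \<partial>\<mu> k)"
    using A' K by (intro product_nn_integral_prod) auto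
  also have "\<dots> = (\<Prod>k\<in>K. emeasure (density (\<mu> k) (f k)) (A k))"
    using A' by (intro prod.cong refl emeasure_density[symmetric]) auto
  also have "\<dots> = emeasure (PiM K (\<lambda>k. density (\<mu> k) (f k))) (PiE K A)"
    using A by (simp add: D.measure_times)
  finally show "emeasure (PiM K (\<lambda>k. density (\<mu> k) (f k))) (PiE K A) =
      emeasure (density (PiM K \<mu>) (\<lambda>x. \<Prod>k\<in>K. f k (x k))) (PiE K A)" ..
next
  show "range (\<lambda>_::nat. space (PiM K (\<lambda>k. density (\<mu> k) (f k)))) \<subseteq> prod_algebra K (\<lambda>k. density (\<mu> k) (f k))"
    using K by (auto simp: space_PiM intro!: prod_algebraI_finite)
  show "emeasure (PiM K (\<lambda>k. density (\<mu> k) (f k))) (space (PiM K (\<lambda>k. density (\<mu> k) (f k)))) \<noteq> \<infinity>"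
    for i :: nat
    using prob_space.emeasure_space_1[OF prob_space_PiM[of K, OF prob]] by simp
qed simp

lemma absolutely_continuous_PiM:
  fixes \<mu> \<nu> :: "'i \<Rightarrow> 'a measure"
  assumes K: "finite K" and \<mu>: "\<And>k. sigma_finite_measure (\<mu> k)" and \<nu>: "\<And>k. prob_space (\<nu> k)"
    and sets_eq: "\<And>k. sets (\<nu> k) = sets (\<mu> k)"
    and ac: "\<And>k. k \<in> K \<Longrightarrow> absolutely_continuous (\<mu> k) (\<nu> k)"
  shows "absolutely_continuous (PiM K \<mu>) (PiM K \<nu>)"
proof -
  \<comment> \<open>The product locales need densities at every index, not just on \<open>K\<close>.\<close>
  define \<mu>' where "\<mu>' k = (if k \<in> K then \<mu> k else \<nu> k)" for k
  have \<mu>': "sigma_finite_measure (\<mu>' k)" for k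
    using \<mu> \<nu> by (simp add: \<mu>'_def prob_space_imp_sigma_finite)
  have dens: "density (\<mu>' k) (RN_deriv (\<mu>' k) (\<nu> k)) = \<nu> k" for k
  proof (rule sigma_finite_measure.density_RN_deriv[OF \<mu>'])
    show "absolutely_continuous (\<mu>' k) (\<nu> k)"
      using ac by (simp add: \<mu>'_def absolutely_continuous_def)
    show "sets (\<nu> k) = sets (\<mu>' k)"
      using sets_eq by (simp add: \<mu>'_def)
  qed
  have "PiM K \<nu> = density (PiM K \<mu>') (\<lambda>x. \<Prod>k\<in>K. RN_deriv (\<mu>' k) (\<nu> k) (x k))"
    using PiM_density[where \<mu>=\<mu>' and f="\<lambda>k. RN_deriv (\<mu>' k) (\<nu> k)"] K \<mu>' dens \<nu> by simp
  moreover have "PiM K \<mu>' = PiM K \<mu>"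
    by (intro PiM_cong) (auto simp: \<mu>'_def)
  moreover have "(\<lambda>x. \<Prod>k\<in>K. RN_deriv (\<mu>' k) (\<nu> k) (x k)) \<in> borel_measurable (PiM K \<mu>')"
    by measurable
  ultimately show ?thesis
    by (metis absolutely_continuousI_density)
qed

lemma (in prob_space) indep_sets_reindex:
  assumes ind: "indep_sets F (\<sigma> ` K)" and inj: "inj_on \<sigma> K"
  shows "indep_sets (\<lambda>k. F (\<sigma> k)) K"
  unfolding indep_sets_def
proof (intro conjI ballI allI impI)
  fix k assume "k \<in> K" then show "F (\<sigma> k) \<subseteq> events"
    using ind unfolding indep_sets_def by auto
next
  fix J A assume J: "J \<subseteq> K" "J \<noteq> {}" "finite J" and A: "A \<in> (\<Pi> j\<in>J. F (\<sigma> j))"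
  define A' where "A' = (\<lambda>i. A (the_inv_into J \<sigma> i))"
  have injJ: "inj_on \<sigma> J" using inj J(1) inj_on_subset by blast
  have A'\<sigma>: "A' (\<sigma> j) = A j" if "j \<in> J" for j
    unfolding A'_def using the_inv_into_f_f[OF injJ that] by simp
  have "\<sigma> ` J \<subseteq> \<sigma> ` K" "\<sigma> ` J \<noteq> {}" "finite (\<sigma> ` J)" using J by auto
  moreover have "A' \<in> (\<Pi> i\<in>\<sigma> ` J. F i)" using A A'\<sigma> by auto
  ultimately have "prob (\<Inter>i\<in>\<sigma> ` J. A' i) = (\<Prod>i\<in>\<sigma> ` J. prob (A' i))"
    using ind unfolding indep_sets_def by blast
  moreover have "(\<Inter>i\<in>\<sigma> ` J. A' i) = (\<Inter>j\<in>J. A j)" using A'\<sigma> by auto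
  moreover have "(\<Prod>i\<in>\<sigma> ` J. prob (A' i)) = (\<Prod>j\<in>J. prob (A j))"
    using prod.reindex[OF injJ, of "\<lambda>i. prob (A' i)"] A'\<sigma> by simp
  ultimately show "prob (\<Inter>j\<in>J. A j) = (\<Prod>j\<in>J. prob (A j))" by simp
qed

lemma (in prob_space) indep_vars_reindex:
  assumes "indep_vars M' X (\<sigma> ` K)" and "inj_on \<sigma> K"
  shows "indep_vars (\<lambda>k. M' (\<sigma> k)) (\<lambda>k. X (\<sigma> k)) K"
  using assms indep_sets_reindex[OF _ assms(2), of "\<lambda>i. {X i -` A \<inter> space M | A. A \<in> sets (M' i)}"]
  unfolding indep_vars_def2 by auto

lemma (in prob_space) absolutely_continuous_distr_indep_vars:
  assumes I: "finite I" and ind: "indep_vars (\<lambda>_. borel) Z I"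
    and Zm: "\<And>i. Z i \<in> borel_measurable M"
    and ac: "\<And>i. i \<in> I \<Longrightarrow> absolutely_continuous lborel (distr M borel (Z i))"
  shows "absolutely_continuous (PiM I (\<lambda>_. lborel)) (distr M (PiM I (\<lambda>_. lborel)) (\<lambda>\<omega>. \<lambda>i\<in>I. Z i \<omega>))"
proof (cases "I = {}")
  case True
  then show ?thesis by (simp add: PiM_empty absolutely_continuousI_count_space)
next
  case False
  have "distr M (PiM I (\<lambda>_. lborel)) (\<lambda>\<omega>. \<lambda>i\<in>I. Z i \<omega>) = distr M (PiM I (\<lambda>_. borel)) (\<lambda>\<omega>. \<lambda>i\<in>I. Z i \<omega>)"
    by (intro distr_cong sets_PiM_cong) auto
  also have "\<dots> = PiM I (\<lambda>i. distr M borel (Z i))"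
    using indep_vars_iff_distr_eq_PiM'[OF False, where M'="\<lambda>_. borel" and X=Z] ind Zm by simp
  finally show ?thesis
    using ac Zm I by (auto intro!: absolutely_continuous_PiM prob_space_distr sigma_finite_lborel)
qed

lemma (in prob_space) AE_inj_if_ties_null:
  fixes X :: "nat \<Rightarrow> 'a \<Rightarrow> real"
  assumes Xm[measurable]: "\<And>k. X k \<in> borel_measurable M"
    and ties: "\<And>k l. k \<noteq> l \<Longrightarrow> prob {\<omega> \<in> space M. X k \<omega> = X l \<omega>} = 0"
  shows "AE \<omega> in M. inj (\<lambda>k. X k \<omega>)"
proof -
  have "AE \<omega> in M. X k \<omega> \<noteq> X l \<omega>" if "k \<noteq> l" for k l
  proof -
    have "{\<omega> \<in> space M. X k \<omega> = X l \<omega>} \<in> events"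
      by measurable
    then show ?thesis
      using ties[OF that] by (simp add: prob_eq_0)
  qed
  then have "AE \<omega> in M. \<forall>k l. k \<noteq> l \<longrightarrow> X k \<omega> \<noteq> X l \<omega>"
    by (simp add: AE_all_countable)
  then show ?thesis
    by eventually_elim (auto simp: inj_def)
qed

abbreviation real_seqs :: "(nat \<Rightarrow> real) measure" where
  "real_seqs \<equiv> PiM UNIV (\<lambda>_::nat. borel :: real measure)"

lemma (in prob_space) AE_entries_of_distinct_rows_notin_null_set:
  fixes n :: nat
  assumes ind: "indep_vars (\<lambda>_. real_seqs) (\<lambda>i \<omega> j. Y i j \<omega>) I"
    and ac: "\<And>i j. i \<in> I \<Longrightarrow> absolutely_continuous lborel (distr M borel (Y i j))"
    and \<sigma>: "\<And>k. \<sigma> k \<in> I" "inj_on \<sigma> {..<n}"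
    and B: "B \<in> null_sets (PiM {..<n} (\<lambda>_. lborel))"
  shows "AE \<omega> in M. (\<lambda>k\<in>{..<n}. Y (\<sigma> k) (\<tau> k) \<omega>) \<notin> B"
proof -
  define Z where "Z k \<omega> = Y (\<sigma> k) (\<tau> k) \<omega>" for k \<omega>
  have Zm: "Z k \<in> borel_measurable M" for k
  proof -
    have "(\<lambda>\<omega> j. Y (\<sigma> k) j \<omega>) \<in> measurable M real_seqs"
      using ind \<sigma>(1) unfolding indep_vars_def by blast
    then show ?thesis
      unfolding Z_def by (rule measurable_compose[OF _ measurable_component_singleton]) simp
  qed
  have "indep_vars (\<lambda>_. real_seqs) (\<lambda>k \<omega> j. Y (\<sigma> k) j \<omega>) {..<n}"
    using indep_vars_reindex[OF indep_vars_subset[OF ind] \<sigma>(2)] \<sigma>(1) by auto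
  then have "indep_vars (\<lambda>_. borel) Z {..<n}"
    unfolding Z_def by (rule indep_vars_compose2[where Y="\<lambda>k s. s (\<tau> k)"]) simp
  then have "absolutely_continuous (PiM {..<n} (\<lambda>_. lborel))
      (distr M (PiM {..<n} (\<lambda>_. lborel)) (\<lambda>\<omega>. \<lambda>k\<in>{..<n}. Z k \<omega>))"
    using Zm ac[OF \<sigma>(1)] unfolding Z_def by (intro absolutely_continuous_distr_indep_vars) auto
  with B have "B \<in> null_sets (distr M (PiM {..<n} (\<lambda>_. lborel)) (\<lambda>\<omega>. \<lambda>k\<in>{..<n}. Z k \<omega>))"
    unfolding absolutely_continuous_def by blast
  moreover have "(\<lambda>\<omega>. \<lambda>k\<in>{..<n}. Z k \<omega>) \<in> measurable M (PiM {..<n} (\<lambda>_. lborel))"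
    using Zm by (intro measurable_restrict) auto
  ultimately show ?thesis
    using null_sets_distr_iff_AE B unfolding Z_def by blast
qed

lemma measurable_real_seqs:
  "(\<And>k. X k \<in> borel_measurable M) \<Longrightarrow> (\<lambda>\<omega> k. X k \<omega>) \<in> measurable M real_seqs"
  by (rule measurable_PiM_single') auto

lemma sets_some_term_in:
  assumes [measurable]: "W \<in> sets borel"
  shows "{z. \<exists>k. z k \<in> W} \<in> sets real_seqs"
proof -
  have "{z. \<exists>k. z k \<in> W} = (\<Union>k. {z \<in> space real_seqs. z k \<in> W})"
    by (auto simp: space_PiM)
  also have "\<dots> \<in> sets real_seqs"
    by measurable
  finally show ?thesis .
qed

lemma emeasure_eq_if_same_random_set:
  assumes "same_random_set P Q" "H \<in> sets real_seqs"
    and range_inv: "\<And>z z'. range z = range z' \<Longrightarrow> z \<in> H \<Longrightarrow> z' \<in> H"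
  shows "emeasure P H = emeasure Q H"
proof -
  obtain \<mu> where \<mu>: "sets \<mu> = sets (real_seqs \<Otimes>\<^sub>M real_seqs)"
    "distr \<mu> real_seqs fst = P" "distr \<mu> real_seqs snd = Q" "AE p in \<mu>. range (fst p) = range (snd p)"
    using assms(1) unfolding same_random_set_def by blast
  have fst: "fst \<in> measurable \<mu> real_seqs" and snd: "snd \<in> measurable \<mu> real_seqs"
    using measurable_cong_sets[OF \<mu>(1) refl] by auto
  have "emeasure P H = emeasure \<mu> (fst -` H \<inter> space \<mu>)"
    unfolding \<mu>(2)[symmetric] using fst assms(2) by (rule emeasure_distr)
  also have "\<dots> = emeasure \<mu> (snd -` H \<inter> space \<mu>)"
  proof (rule emeasure_eq_AE)
    show "AE p in \<mu>. p \<in> fst -` H \<inter> space \<mu> \<longleftrightarrow> p \<in> snd -` H \<inter> space \<mu>"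
      using \<mu>(4) by eventually_elim (use range_inv in blast)
  qed (use fst snd assms(2) in auto)
  also have "\<dots> = emeasure Q H"
    unfolding \<mu>(3)[symmetric] using snd assms(2) by (rule emeasure_distr[symmetric])
  finally show ?thesis .
qed

lemma AE_notin_iff_if_same_random_set:
  assumes same: "same_random_set (seq_law N Z) (seq_law M X)"
    and Zm: "\<And>k. Z k \<in> borel_measurable N" and Xm: "\<And>k. X k \<in> borel_measurable M"
    and H: "H \<in> sets real_seqs" and range_inv: "\<And>z z'. range z = range z' \<Longrightarrow> z \<in> H \<Longrightarrow> z' \<in> H"
  shows "(AE \<omega> in N. (\<lambda>k. Z k \<omega>) \<notin> H) \<longleftrightarrow> (AE \<omega> in M. (\<lambda>k. X k \<omega>) \<notin> H)"
proof -
  have "(AE \<omega> in N. (\<lambda>k. Z k \<omega>) \<notin> H) \<longleftrightarrow> H \<in> null_sets (seq_law N Z)"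
    unfolding seq_law_def using measurable_real_seqs[OF Zm] H by (rule null_sets_distr_iff_AE[symmetric])
  also have "\<dots> \<longleftrightarrow> H \<in> null_sets (seq_law M X)"
  proof -
    have "emeasure (seq_law N Z) H = emeasure (seq_law M X) H"
      by (rule emeasure_eq_if_same_random_set[OF same H]) (fact range_inv)
    then show ?thesis
      using H by (simp add: null_sets_def seq_law_def)
  qed
  also have "\<dots> \<longleftrightarrow> (AE \<omega> in M. (\<lambda>k. X k \<omega>) \<notin> H)"
    unfolding seq_law_def using measurable_real_seqs[OF Xm] H by (rule null_sets_distr_iff_AE)
  finally show ?thesis .
qed

lemma absolutely_continuous_if_same_random_set:
  assumes same: "same_random_set (seq_law N Z) (seq_law M X)"
    and Zm: "\<And>k. Z k \<in> borel_measurable N" and Xm: "\<And>k. X k \<in> borel_measurable M"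
    and X01: "\<And>k \<omega>. \<omega> \<in> space M \<Longrightarrow> X k \<omega> \<in> {0<..<1}"
    and null: "\<And>B. B \<in> sets borel \<Longrightarrow> B \<subseteq> {0<..<1} \<Longrightarrow> emeasure lborel B = 0 \<Longrightarrow>
                 (AE \<omega> in M. \<forall>k. X k \<omega> \<notin> B)"
  shows "absolutely_continuous lborel (distr N borel (Z k))"
proof (rule absolutely_continuous_distrI[OF Zm sets_lborel])
  fix A :: "real set" assume A: "A \<in> null_sets lborel"
  \<comment> \<open>\<open>Z\<close> is not known to take values in \<open>{0<..<1}\<close>, hence the complement is added.\<close>
  define W where "W = A \<union> - {0<..<1}"
  define H where "H = {z. \<exists>k::nat. z k \<in> W}"
  have H_sets: "H \<in> sets real_seqs"
    using A unfolding H_def W_def by (intro sets_some_term_in) auto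
  have "AE \<omega> in M. \<forall>k. X k \<omega> \<notin> A \<inter> {0<..<1}"
  proof (rule null)
    show "A \<inter> {0<..<1} \<in> sets borel" using A by auto
    then show "emeasure lborel (A \<inter> {0<..<1}) = 0"
      using null_sets_subset[OF A, of "A \<inter> {0<..<1}"] by auto
  qed auto
  then have "AE \<omega> in M. (\<lambda>k. X k \<omega>) \<notin> H"
    using AE_space by eventually_elim (use X01 in \<open>auto simp: H_def W_def\<close>)
  moreover have "z' \<in> H" if range_eq: "range z = range z'" and "z \<in> H" for z z' :: "nat \<Rightarrow> real"
  proof -
    obtain k where "z k \<in> W" using \<open>z \<in> H\<close> by (auto simp: H_def)
    moreover have "z k \<in> range z'" unfolding range_eq[symmetric] by simp
    ultimately show ?thesis by (auto simp: H_def)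
  qed
  ultimately have "AE \<omega> in N. (\<lambda>k. Z k \<omega>) \<notin> H"
    using AE_notin_iff_if_same_random_set[OF same Zm Xm H_sets] by blast
  then show "AE \<omega> in N. Z k \<omega> \<notin> A"
    by eventually_elim (auto simp: H_def W_def)
qed

lemma eventually_inj_on_floor_mult:
  fixes x :: "'a \<Rightarrow> real"
  assumes K: "finite K" and inj: "inj_on x K"
  shows "\<forall>\<^sub>F N in sequentially. inj_on (\<lambda>k. \<lfloor>real N * x k\<rfloor>) K"
proof -
  have "\<forall>\<^sub>F N in sequentially. \<forall>p\<in>K \<times> K. fst p \<noteq> snd p \<longrightarrow> 1 < real N * \<bar>x (fst p) - x (snd p)\<bar>"
  proof (intro eventually_ball_finite ballI)
    fix p assume p: "p \<in> K \<times> K"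
    show "\<forall>\<^sub>F N in sequentially. fst p \<noteq> snd p \<longrightarrow> 1 < real N * \<bar>x (fst p) - x (snd p)\<bar>"
    proof (cases "fst p = snd p")
      case False
      then have d: "\<bar>x (fst p) - x (snd p)\<bar> > 0"
        using inj p by (auto dest: inj_onD)
      have "\<forall>\<^sub>F N in sequentially. real N > 1 / \<bar>x (fst p) - x (snd p)\<bar>"
        using filterlim_real_sequentially by (simp add: filterlim_at_top_dense)
      then show ?thesis
        by eventually_elim (use d in \<open>simp add: divide_less_eq\<close>)
    qed simp
  qed (use K in simp)
  then show ?thesis
  proof eventually_elim
    case (elim N)
    show ?case
    proof (rule inj_onI, rule ccontr)
      fix k l assume kl: "k \<in> K" "l \<in> K" "\<lfloor>real N * x k\<rfloor> = \<lfloor>real N * x l\<rfloor>" "k \<noteq> l"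
      have "real_of_int \<lfloor>real N * x k\<rfloor> = real_of_int \<lfloor>real N * x l\<rfloor>"
        using kl(3) by simp
      then have "\<bar>real N * x k - real N * x l\<bar> < 1"
        by linarith
      moreover have "1 < real N * \<bar>x k - x l\<bar>"
        using bspec[OF elim, of "(k, l)"] kl by simp
      moreover have "real N * \<bar>x k - x l\<bar> = \<bar>real N * x k - real N * x l\<bar>"
        by (simp only: abs_mult abs_of_nat flip: right_diff_distrib)
      ultimately show False
        by linarith
    qed
  qed
qed

text \<open>The cell \<open>[i/N, (i+1)/N)\<close> containing \<open>y\<close> is numbered \<open>\<lfloor>N y\<rfloor>\<close>.\<close>

definition hits_in_distinct_cells :: "nat \<Rightarrow> nat \<Rightarrow> (nat \<Rightarrow> real) set \<Rightarrow> (nat \<Rightarrow> real) set" where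
  "hits_in_distinct_cells n N B =
     {z. \<exists>t \<in> {..<n} \<rightarrow>\<^sub>E UNIV. (\<lambda>k\<in>{..<n}. z (t k)) \<in> B \<and> inj_on (\<lambda>k. \<lfloor>real N * z (t k)\<rfloor>) {..<n}}"

lemma hits_in_distinct_cells_sets:
  assumes [measurable]: "B \<in> sets (PiM {..<n} (\<lambda>_. borel))"
  shows "hits_in_distinct_cells n N B \<in> sets real_seqs"
proof -
  have "hits_in_distinct_cells n N B = (\<Union>t \<in> {..<n} \<rightarrow>\<^sub>E UNIV. {z \<in> space real_seqs.
      (\<lambda>k\<in>{..<n}. z (t k)) \<in> B \<and> (\<forall>k<n. \<forall>l<n. \<lfloor>real N * z (t k)\<rfloor> = \<lfloor>real N * z (t l)\<rfloor> \<longrightarrow> k = l)})"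
    by (auto simp: hits_in_distinct_cells_def inj_on_def space_PiM)
  also have "\<dots> \<in> sets real_seqs"
  proof (intro sets.countable_UN' countable_PiE image_subsetI)
    fix t :: "nat \<Rightarrow> nat"
    show "{z \<in> space real_seqs. (\<lambda>k\<in>{..<n}. z (t k)) \<in> B \<and>
        (\<forall>k<n. \<forall>l<n. \<lfloor>real N * z (t k)\<rfloor> = \<lfloor>real N * z (t l)\<rfloor> \<longrightarrow> k = l)} \<in> sets real_seqs"
      by measurable
  qed auto
  finally show ?thesis .
qed

lemma hits_in_distinct_cells_range_eq:
  assumes "range z = range z'" "z \<in> hits_in_distinct_cells n N B"
  shows "z' \<in> hits_in_distinct_cells n N B"
proof -
  obtain t where t: "t \<in> {..<n} \<rightarrow>\<^sub>E UNIV" "(\<lambda>k\<in>{..<n}. z (t k)) \<in> B"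
    "inj_on (\<lambda>k. \<lfloor>real N * z (t k)\<rfloor>) {..<n}"
    using assms(2) unfolding hits_in_distinct_cells_def by blast
  define t' where "t' = (\<lambda>k\<in>{..<n}. SOME l. z' l = z (t k))"
  have z't': "z' (t' k) = z (t k)" if "k < n" for k
  proof -
    have "z (t k) \<in> range z'"
      unfolding assms(1)[symmetric] by simp
    then have "\<exists>l. z' l = z (t k)"
      by (metis rangeE)
    then show ?thesis
      unfolding t'_def using that by (auto intro: someI_ex)
  qed
  show ?thesis
    unfolding hits_in_distinct_cells_def
  proof (intro CollectI bexI conjI)
    have "(\<lambda>k\<in>{..<n}. z' (t' k)) = (\<lambda>k\<in>{..<n}. z (t k))"
      using z't' by auto
    then show "(\<lambda>k\<in>{..<n}. z' (t' k)) \<in> B"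
      using t(2) by simp
    show "inj_on (\<lambda>k. \<lfloor>real N * z' (t' k)\<rfloor>) {..<n}"
      using t(3) by (rule inj_on_cong[THEN iffD1, rotated]) (simp add: z't')
    show "t' \<in> {..<n} \<rightarrow>\<^sub>E UNIV"
      by (simp add: t'_def)
  qed
qed

lemma eventually_in_hits_in_distinct_cells:
  assumes "inj_on z {..<n}" "(\<lambda>k\<in>{..<n}. z k) \<in> B"
  shows "\<forall>\<^sub>F N in sequentially. z \<in> hits_in_distinct_cells n N B"
  using eventually_inj_on_floor_mult[OF finite_lessThan assms(1)]
proof eventually_elim
  case (elim N)
  show ?case
    unfolding hits_in_distinct_cells_def
  proof (intro CollectI bexI[of _ "\<lambda>k\<in>{..<n}. k"] conjI)
    have "(\<lambda>k\<in>{..<n}. z ((\<lambda>k\<in>{..<n}. k) k)) = (\<lambda>k\<in>{..<n}. z k)"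
      by auto
    then show "(\<lambda>k\<in>{..<n}. z ((\<lambda>k\<in>{..<n}. k) k)) \<in> B"
      using assms(2) by simp
    show "inj_on (\<lambda>k. \<lfloor>real N * z ((\<lambda>k\<in>{..<n}. k) k)\<rfloor>) {..<n}"
      using elim by (rule inj_on_cong[THEN iffD1, rotated]) simp
  qed simp
qed

lemma (in prob_space) AE_enumeration_notin_hits_in_distinct_cells:
  fixes Y :: "nat \<Rightarrow> nat \<Rightarrow> 'a \<Rightarrow> real" and n N :: nat
  assumes N: "N > 0"
    and ind: "indep_vars (\<lambda>_. real_seqs) (\<lambda>i \<omega> j. Y i j \<omega>) {..<N}"
    and ac: "\<And>i j. i < N \<Longrightarrow> absolutely_continuous lborel (distr M borel (Y i j))"
    and cells: "\<And>i j. i < N \<Longrightarrow> AE \<omega> in M. \<lfloor>real N * Y i j \<omega>\<rfloor> = int i"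
    and B: "B \<in> null_sets (PiM {..<n} (\<lambda>_. lborel))"
  shows "AE \<omega> in M. (\<lambda>k. Y (k mod N) (k div N) \<omega>) \<notin> hits_in_distinct_cells n N B"
proof -
  have "AE \<omega> in M. \<forall>k. \<lfloor>real N * Y (k mod N) (k div N) \<omega>\<rfloor> = int (k mod N)"
    using N cells by (simp add: AE_all_countable)
  moreover have "AE \<omega> in M. \<forall>t \<in> {..<n} \<rightarrow>\<^sub>E UNIV. inj_on (\<lambda>k. t k mod N) {..<n} \<longrightarrow>
      (\<lambda>k\<in>{..<n}. Y (t k mod N) (t k div N) \<omega>) \<notin> B"
  proof (rule AE_ball_countable')
    fix t :: "nat \<Rightarrow> nat"
    show "AE \<omega> in M. inj_on (\<lambda>k. t k mod N) {..<n} \<longrightarrow>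
        (\<lambda>k\<in>{..<n}. Y (t k mod N) (t k div N) \<omega>) \<notin> B"
      using AE_entries_of_distinct_rows_notin_null_set[OF ind ac _ _ B, of "\<lambda>k. t k mod N" "\<lambda>k. t k div N"] N
      by auto
  qed (simp add: countable_PiE)
  ultimately show ?thesis
  proof eventually_elim
    case (elim \<omega>)
    show ?case
    proof
      assume "(\<lambda>k. Y (k mod N) (k div N) \<omega>) \<in> hits_in_distinct_cells n N B"
      then obtain t where t: "t \<in> {..<n} \<rightarrow>\<^sub>E UNIV" "(\<lambda>k\<in>{..<n}. Y (t k mod N) (t k div N) \<omega>) \<in> B"
          "inj_on (\<lambda>k. \<lfloor>real N * Y (t k mod N) (t k div N) \<omega>\<rfloor>) {..<n}"
        unfolding hits_in_distinct_cells_def by blast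
      have "inj_on (\<lambda>k. int (t k mod N)) {..<n}"
        using t(3) elim(1) by simp
      then have "inj_on (\<lambda>k. t k mod N) {..<n}"
        by (auto simp: inj_on_def)
      then show False
        using elim(2) t(1,2) by blast
    qed
  qed
qed

lemma AE_notin_hits_in_distinct_cells:
  fixes M :: "'a measure" and X :: "nat \<Rightarrow> 'a \<Rightarrow> real" and n N :: nat
  assumes Xm: "\<And>k. X k \<in> borel_measurable M"
    and X01: "\<And>k \<omega>. \<omega> \<in> space M \<Longrightarrow> X k \<omega> \<in> {0<..<1}"
    and indep: "independence_condition M X"
    and null: "\<And>B. B \<in> sets borel \<Longrightarrow> B \<subseteq> {0<..<1} \<Longrightarrow> emeasure lborel B = 0 \<Longrightarrow>
                 (AE \<omega> in M. \<forall>k. X k \<omega> \<notin> B)"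
    and B: "B \<in> null_sets (PiM {..<n} (\<lambda>_. lborel))"
    and N: "N \<ge> 2"
  shows "AE \<omega> in M. (\<lambda>k. X k \<omega>) \<notin> hits_in_distinct_cells n N B"
proof -
  define a where "a i = real i / real N" for i
  have "N \<ge> 2 \<and> a 0 = 0 \<and> a N = 1 \<and> (\<forall>i<N. a i < a (Suc i))"
    using N by (auto simp: a_def divide_strict_right_mono)
  then obtain \<Omega> :: "(nat \<Rightarrow> nat \<Rightarrow> real) measure" and Y where
    \<Omega>: "prob_space \<Omega>" and Ym: "\<forall>i<N. \<forall>j. Y i j \<in> borel_measurable \<Omega>"
    and same: "same_random_set (seq_law \<Omega> (\<lambda>k. Y (k mod N) (k div N))) (seq_law M X)"
    and intervals: "\<forall>i<N. \<forall>j. AE \<omega> in \<Omega>. a i \<le> Y i j \<omega> \<and> Y i j \<omega> < a (Suc i)"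
    and ind: "prob_space.indep_vars \<Omega> (\<lambda>_. real_seqs) (\<lambda>i \<omega> j. Y i j \<omega>) {..<N}"
    using indep unfolding independence_condition_def by blast
  have Zm: "Y (k mod N) (k div N) \<in> borel_measurable \<Omega>" for k
    using Ym N by simp
  have B_sets: "B \<in> sets (PiM {..<n} (\<lambda>_. borel))"
    using B sets_PiM_cong[of "{..<n}" "{..<n}" "\<lambda>_. lborel" "\<lambda>_. borel"] by auto
  have "AE \<omega> in \<Omega>. (\<lambda>k. Y (k mod N) (k div N) \<omega>) \<notin> hits_in_distinct_cells n N B"
  proof (rule prob_space.AE_enumeration_notin_hits_in_distinct_cells[OF \<Omega> _ ind _ _ B])
    show "0 < N" using N by simp
    fix i j assume i: "i < N"
    have "absolutely_continuous lborel (distr \<Omega> borel (Y ((j * N + i) mod N) ((j * N + i) div N)))"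
      by (rule absolutely_continuous_if_same_random_set[OF same Zm Xm X01 null])
    then show "absolutely_continuous lborel (distr \<Omega> borel (Y i j))"
      using i by simp
    have "AE \<omega> in \<Omega>. a i \<le> Y i j \<omega> \<and> Y i j \<omega> < a (Suc i)"
      using intervals i by blast
    then show "AE \<omega> in \<Omega>. \<lfloor>real N * Y i j \<omega>\<rfloor> = int i"
      by eventually_elim (use N in \<open>simp add: a_def floor_eq_iff field_simps\<close>)
  qed
  moreover have "(AE \<omega> in \<Omega>. (\<lambda>k. Y (k mod N) (k div N) \<omega>) \<notin> hits_in_distinct_cells n N B) \<longleftrightarrow>
      (AE \<omega> in M. (\<lambda>k. X k \<omega>) \<notin> hits_in_distinct_cells n N B)"
    by (rule AE_notin_iff_if_same_random_set[OF same Zm Xm hits_in_distinct_cells_sets[OF B_sets]])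
      (erule (1) hits_in_distinct_cells_range_eq)
  ultimately show ?thesis
    by blast
qed

lemma AE_restrict_notin_if_AE_notin_hits:
  fixes X :: "nat \<Rightarrow> 'a \<Rightarrow> real"
  assumes inj: "AE \<omega> in M. inj (\<lambda>k. X k \<omega>)"
    and hits: "\<And>N. N \<ge> 2 \<Longrightarrow> AE \<omega> in M. (\<lambda>k. X k \<omega>) \<notin> hits_in_distinct_cells n N B"
  shows "AE \<omega> in M. (\<lambda>k\<in>{..<n}. X k \<omega>) \<notin> B"
proof -
  have "AE \<omega> in M. \<forall>N. N \<ge> 2 \<longrightarrow> (\<lambda>k. X k \<omega>) \<notin> hits_in_distinct_cells n N B"
    using hits by (subst AE_all_countable) auto
  with inj show ?thesis
  proof eventually_elim
    case (elim \<omega>)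
    show ?case
    proof
      assume "(\<lambda>k\<in>{..<n}. X k \<omega>) \<in> B"
      with elim(1) have "\<forall>\<^sub>F N in sequentially. (\<lambda>k. X k \<omega>) \<in> hits_in_distinct_cells n N B"
        by (intro eventually_in_hits_in_distinct_cells) (auto intro: inj_on_subset)
      then obtain N0 where "\<forall>N\<ge>N0. (\<lambda>k. X k \<omega>) \<in> hits_in_distinct_cells n N B"
        unfolding eventually_sequentially by blast
      then have "(\<lambda>k. X k \<omega>) \<in> hits_in_distinct_cells n (max 2 N0) B"
        by simp
      with elim(2) show False
        by simp
    qed
  qed
qed

theorem lemma5p10:
  fixes M :: "'a measure" and X :: "nat \<Rightarrow> 'a \<Rightarrow> real"
  assumes "prob_space M"
    and "\<And>k. X k \<in> borel_measurable M"
    and "\<And>k \<omega>. \<omega> \<in> space M \<Longrightarrow> X k \<omega> \<in> {0<..<1}"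
    and dense: "AE \<omega> in M. {0<..<1} \<subseteq> closure (range (\<lambda>k. X k \<omega>))"
    and "independence_condition M X"
    and null: "\<And>B. B \<in> sets borel \<Longrightarrow> B \<subseteq> {0<..<1} \<Longrightarrow> emeasure lborel B = 0 \<Longrightarrow>
                 (AE \<omega> in M. \<forall>k. X k \<omega> \<notin> B)"
    and distinct: "\<And>k l. k \<noteq> l \<Longrightarrow> measure M {\<omega> \<in> space M. X k \<omega> = X l \<omega>} = 0"
  shows "\<forall>n. absolutely_continuous (PiM {..<n} (\<lambda>_. lborel))
              (distr M (PiM {..<n} (\<lambda>_. lborel)) (\<lambda>\<omega>. \<lambda>k\<in>{..<n}. X k \<omega>))"
proof
  fix n :: nat
  interpret M: prob_space M by fact
  show "absolutely_continuous (PiM {..<n} (\<lambda>_. lborel))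
      (distr M (PiM {..<n} (\<lambda>_. lborel)) (\<lambda>\<omega>. \<lambda>k\<in>{..<n}. X k \<omega>))"
  proof (rule absolutely_continuous_distrI)
    show "(\<lambda>\<omega>. \<lambda>k\<in>{..<n}. X k \<omega>) \<in> M \<rightarrow>\<^sub>M PiM {..<n} (\<lambda>_. lborel)"
      using assms(2) by (intro measurable_restrict) auto
    fix B :: "(nat \<Rightarrow> real) set" assume B: "B \<in> null_sets (PiM {..<n} (\<lambda>_. lborel))"
    show "AE \<omega> in M. (\<lambda>k\<in>{..<n}. X k \<omega>) \<notin> B"
    proof (rule AE_restrict_notin_if_AE_notin_hits)
      show "AE \<omega> in M. inj (\<lambda>k. X k \<omega>)"
        using M.AE_inj_if_ties_null[OF assms(2) distinct] .
      show "AE \<omega> in M. (\<lambda>k. X k \<omega>) \<notin> hits_in_distinct_cells n N B" if "N \<ge> 2" for N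
        by (rule AE_notin_hits_in_distinct_cells[OF assms(2,3,5) null B that])
    qed
  qed simp
qed

end
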